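(* Let $\mathcal{X}$ be an infinite instance domain, $l\ge0$ an integer, and $\mathcal{C}^l$ the class of unions of at most $l$ singletons. Then for every integer $k\ge0$, \[ \mathrm{ELdim}(\mathcal{C}^l,k)=\sup\Big\{t:\binom{t}{\le k+1}\le\binom{t}{\le l}\Big\}=\begin{cases}\infty,& k\le l-1,\\ l,& k\ge l.\end{cases} \]
   Context: $\mathcal{C}^l$ is the class of functions $\mathcal{X}\to\{-1,+1\}$ of the form $x\mapsto1-2I(x\in D)$ with $D\subseteq\mathcal{X}$, $|D|\le l$. $\binom{t}{\le j}=\sum_{i=0}^{j}\binom{t}{i}$. Extended mistake tree w.r.t. a class $\mathcal{H}$: a finite full binary tree (possibly a single leaf) in which each internal node $v$ is labeled by $x_v\in\mathcal{X}$ and has two solid downward edges, to its left child (label $-1$) and right child (label $+1$), plus one dashed downward edge to one of its two children; each leaf is labeled by some $h\in\mathcal{H}$ with $h(x_v)$ equal to the direction label at every internal node $v$ on the root-to-leaf path. A root-to-leaf path chooses at each internal node one downward edge; its length is its number of edges. The tree is $(k,m)$-difficult if every root-to-leaf path using at most $k$ solid edges has length at least $m$. $\mathrm{ELdim}(\mathcal{H},k)$ is the supremum of $m$ such that a $(k,m)$-difficult extended mistake tree w.r.t. $\mathcal{H}$ exists. *)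

theory Defs
  imports Main "HOL-Library.Extended_Nat"
begin

definition Cl :: "nat \<Rightarrow> ('a \<Rightarrow> int) set" where
  "Cl l = {h. \<exists>D. finite D \<and> card D \<le> l \<and> h = (\<lambda>x. if x \<in> D then -1 else 1)}"

definition choose_le :: "nat \<Rightarrow> nat \<Rightarrow> nat" where
  "choose_le t j = (\<Sum>i\<le>j. t choose i)"

text \<open>Extended mistake trees: a node carries its label x, its left child (direction -1),
  its right child (direction +1), and a boolean telling where the dashed edge goes
  (True = right child, False = left child).\<close>
datatype 'a emtree = Leaf "'a \<Rightarrow> int" | Node 'a "'a emtree" "'a emtree" bool

fun emtree_ok :: "('a \<Rightarrow> int) set \<Rightarrow> ('a \<times> int) list \<Rightarrow> 'a emtree \<Rightarrow> bool" where
  "emtree_ok H cs (Leaf h) = (h \<in> H \<and> (\<forall>(x, y) \<in> set cs. h x = y))"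
| "emtree_ok H cs (Node x l r d) =
     (emtree_ok H ((x, -1) # cs) l \<and> emtree_ok H ((x, 1) # cs) r)"

definition ext_mistake_tree :: "('a \<Rightarrow> int) set \<Rightarrow> 'a emtree \<Rightarrow> bool" where
  "ext_mistake_tree H t = emtree_ok H [] t"

text \<open>Root-to-leaf paths, recorded as pairs (number of solid edges, length).\<close>
fun emtree_paths :: "'a emtree \<Rightarrow> (nat \<times> nat) set" where
  "emtree_paths (Leaf h) = {(0, 0)}"
| "emtree_paths (Node x l r d) =
     {(Suc s, Suc n) | s n. (s, n) \<in> emtree_paths l \<union> emtree_paths r}
   \<union> {(s, Suc n) | s n. (s, n) \<in> emtree_paths (if d then r else l)}"

definition difficult :: "nat \<Rightarrow> nat \<Rightarrow> 'a emtree \<Rightarrow> bool" where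
  "difficult k m t = (\<forall>(s, n) \<in> emtree_paths t. s \<le> k \<longrightarrow> m \<le> n)"

definition ELdim :: "('a \<Rightarrow> int) set \<Rightarrow> nat \<Rightarrow> enat" where
  "ELdim H k = Sup {enat m | m. \<exists>t. ext_mistake_tree H t \<and> difficult k m t}"

end

theory Submission
  imports Defs
begin

text \<open>Upper bound: along the path that always takes the left (label $-1$) edge, the node labels
  are pairwise distinct (a label already forced to $-1$ would leave its right subtree without
  a consistent hypothesis) and all lie in the set $D$ of the final leaf's hypothesis, so this
  all-solid path has length at most $l$; hence for $k \ge l$ no tree is $(k, l+1)$-difficult.
  Lower bound: on fresh points $x_0, x_1, \ldots$ build the tree whose dashed edges go right and
  whose left edges each spend one of $l$ available points, stopping when the budget is spent.
  A path ending before full depth has taken $l$ left, hence solid, edges; so with $k < l$ every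
  admissible path is as long as the (arbitrary) depth, and with $k \ge l$ every path of the
  depth-$l$ tree has length at least $l$.
  Finally $\binom{t}{\le k+1} \le \binom{t}{\le l}$ holds for all $t$ when $k < l$ and exactly
  for $t \le l$ otherwise.\<close>

definition sign_hyp :: "'a set \<Rightarrow> 'a \<Rightarrow> int" where
  "sign_hyp D x = (if x \<in> D then -1 else 1)"

lemma Cl_eq: "Cl l = {sign_hyp D | D. finite D \<and> card D \<le> l}"
  unfolding Cl_def sign_hyp_def by blast

lemma emtree_ok_imp_consistent:
  "emtree_ok H cs t \<Longrightarrow> \<exists>h\<in>H. \<forall>(x, y)\<in>set cs. h x = y"
proof (induction t arbitrary: cs)
  case (Node x t1 t2 d)
  then obtain h where "h \<in> H" "\<forall>(a, b)\<in>set ((x, -1) # cs). h a = b"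
    by (meson emtree_ok.simps(2))
  then show ?case by auto
qed auto

lemma emtree_paths_solid_le_length: "(s, n) \<in> emtree_paths t \<Longrightarrow> s \<le> n"
proof (induction t arbitrary: s n)
  case (Node x t1 t2 d)
  from Node.prems show ?case
    by (auto split: if_splits dest: Node.IH)
qed simp

lemma Cl_tree_short_solid_path:
  assumes "emtree_ok (Cl l) cs t"
  shows "\<exists>m. (m, m) \<in> emtree_paths t \<and> finite {x. (x, -1) \<in> set cs}
              \<and> m + card {x. (x, -1) \<in> set cs} \<le> l"
  using assms
proof (induction t arbitrary: cs)
  case (Leaf h)
  then obtain D where D: "finite D" "card D \<le> l" "h = sign_hyp D"
    by (auto simp: Cl_eq)
  have sub: "{x. (x, -1) \<in> set cs} \<subseteq> D"
    using Leaf D by (auto simp: sign_hyp_def split: if_splits)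
  have "finite {x. (x, -1) \<in> set cs}"
    using finite_subset[OF sub D(1)] .
  moreover have "card {x. (x, -1) \<in> set cs} \<le> l"
    using card_mono[OF D(1) sub] D(2) by linarith
  ultimately show ?case by simp
next
  case (Node x t1 t2 d)
  define A where "A = {x. (x, -1) \<in> set cs}"
  have "x \<notin> A"
  proof
    assume "x \<in> A"
    obtain h where "\<forall>(a, b)\<in>set ((x, 1) # cs). h a = b"
      using Node.prems emtree_ok_imp_consistent[of "Cl l" "(x, 1) # cs" t2] by auto
    with \<open>x \<in> A\<close> show False
      unfolding A_def by fastforce
  qed
  have "insert x A = {y. (y, -1) \<in> set ((x, -1) # cs)}"
    unfolding A_def by auto
  moreover have "\<exists>m. (m, m) \<in> emtree_paths t1 \<and> finite {y. (y, -1) \<in> set ((x, -1) # cs)}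
      \<and> m + card {y. (y, -1) \<in> set ((x, -1) # cs)} \<le> l"
    by (rule Node.IH(1)) (use Node.prems in simp)
  ultimately obtain m where m: "(m, m) \<in> emtree_paths t1" "finite (insert x A)"
    "m + card (insert x A) \<le> l"
    by auto
  have "(Suc m, Suc m) \<in> emtree_paths (Node x t1 t2 d)"
    using m(1) by auto
  moreover have "finite A" "Suc m + card A \<le> l"
    using m(2,3) \<open>x \<notin> A\<close> by auto
  ultimately show ?case
    unfolding A_def by blast
qed

fun budget_tree :: "(nat \<Rightarrow> 'a) \<Rightarrow> nat \<Rightarrow> nat \<Rightarrow> nat \<Rightarrow> 'a set \<Rightarrow> 'a emtree" where
  "budget_tree f j 0 c D = Leaf (sign_hyp D)"
| "budget_tree f j (Suc m) 0 D = Leaf (sign_hyp D)"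
| "budget_tree f j (Suc m) (Suc c) D =
     Node (f j) (budget_tree f (Suc j) m c (insert (f j) D))
                (budget_tree f (Suc j) m (Suc c) D) True"

lemma budget_tree_paths:
  "(s, n) \<in> emtree_paths (budget_tree f j m c D) \<Longrightarrow> m \<le> n \<or> c \<le> s"
proof (induction f j m c D arbitrary: s n rule: budget_tree.induct)
  case (3 f j m c D)
  then show ?case by (auto; fastforce)
qed auto

lemma budget_tree_ok:
  assumes "inj f" "finite D" "card D + c \<le> l" "D \<subseteq> f ` {..<j}"
    and "\<forall>(x, y)\<in>set cs. x \<in> f ` {..<j} \<and> y = sign_hyp D x"
  shows "emtree_ok (Cl l) cs (budget_tree f j m c D)"
  using assms
proof (induction f j m c D arbitrary: cs rule: budget_tree.induct)
  case (1 f j c D)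
  then show ?case by (fastforce simp: Cl_eq)
next
  case (2 f j m D)
  then show ?case by (fastforce simp: Cl_eq)
next
  case (3 f j m c D)
  have fresh: "f j \<notin> f ` {..<j}"
    using \<open>inj f\<close> by (auto simp: inj_eq)
  with 3 have "f j \<notin> D" by auto
  have "emtree_ok (Cl l) ((f j, -1) # cs) (budget_tree f (Suc j) m c (insert (f j) D))"
  proof (rule 3(1))
    show "card (insert (f j) D) + c \<le> l"
      using 3 \<open>f j \<notin> D\<close> by simp
    show "\<forall>(x, y)\<in>set ((f j, -1) # cs). x \<in> f ` {..<Suc j} \<and> y = sign_hyp (insert (f j) D) x"
      using 3(7) fresh by (fastforce simp: sign_hyp_def less_Suc_eq)
  qed (use 3 in \<open>auto simp: lessThan_Suc\<close>)
  moreover have "emtree_ok (Cl l) ((f j, 1) # cs) (budget_tree f (Suc j) m (Suc c) D)"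
  proof (rule 3(2))
    show "\<forall>(x, y)\<in>set ((f j, 1) # cs). x \<in> f ` {..<Suc j} \<and> y = sign_hyp D x"
      using 3(7) \<open>f j \<notin> D\<close> by (fastforce simp: sign_hyp_def less_Suc_eq)
  qed (use 3 in \<open>auto simp: lessThan_Suc\<close>)
  ultimately show ?case by simp
qed

lemma ext_mistake_tree_budget_tree:
  "inj f \<Longrightarrow> ext_mistake_tree (Cl l) (budget_tree f 0 m l {})"
  unfolding ext_mistake_tree_def by (rule budget_tree_ok) auto

lemma Sup_enat_unbounded: "(\<And>m. enat m \<in> A) \<Longrightarrow> Sup A = \<infinity>"
proof (cases "Sup A")
  case (enat n)
  assume "\<And>m. enat m \<in> A"
  then have "enat (Suc n) \<le> Sup A" by (rule Sup_upper)
  with enat show ?thesis by simp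
qed simp

lemma Sup_enat_eq_greatest: "enat l \<in> A \<Longrightarrow> (\<And>x. x \<in> A \<Longrightarrow> x \<le> enat l) \<Longrightarrow> Sup A = enat l"
  by (meson Sup_least Sup_upper antisym)

lemma ELdim_Cl_infinite:
  assumes "infinite (UNIV :: 'a set)" "k < l"
  shows "ELdim (Cl l :: ('a \<Rightarrow> int) set) k = \<infinity>"
proof -
  obtain f :: "nat \<Rightarrow> 'a" where "inj f"
    using infinite_countable_subset[OF assms(1)] by blast
  have "difficult k m (budget_tree f 0 m l {})" for m
    unfolding difficult_def using budget_tree_paths \<open>k < l\<close> by fastforce
  then show ?thesis
    unfolding ELdim_def
    by (intro Sup_enat_unbounded) (use ext_mistake_tree_budget_tree[OF \<open>inj f\<close>] in blast)
qed

lemma ELdim_Cl_finite: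
  assumes "infinite (UNIV :: 'a set)" "l \<le> k"
  shows "ELdim (Cl l :: ('a \<Rightarrow> int) set) k = enat l"
  unfolding ELdim_def
proof (rule Sup_enat_eq_greatest)
  obtain f :: "nat \<Rightarrow> 'a" where "inj f"
    using infinite_countable_subset[OF assms(1)] by blast
  have "difficult k l (budget_tree f 0 l l {})"
    unfolding difficult_def using budget_tree_paths emtree_paths_solid_le_length by fastforce
  with ext_mistake_tree_budget_tree[OF \<open>inj f\<close>]
  show "enat l \<in> {enat m | m. \<exists>t. ext_mistake_tree (Cl l :: ('a \<Rightarrow> int) set) t \<and> difficult k m t}"
    by blast
next
  fix x
  assume "x \<in> {enat m | m. \<exists>t. ext_mistake_tree (Cl l :: ('a \<Rightarrow> int) set) t \<and> difficult k m t}"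
  then obtain m t where x: "x = enat m" "ext_mistake_tree (Cl l :: ('a \<Rightarrow> int) set) t"
    "difficult k m t" by blast
  obtain n where "(n, n) \<in> emtree_paths t" "n \<le> l"
    using Cl_tree_short_solid_path[of l "[]" t] x(2) by (auto simp: ext_mistake_tree_def)
  with x(3) \<open>l \<le> k\<close> have "m \<le> l"
    unfolding difficult_def by fastforce
  with x(1) show "x \<le> enat l" by simp
qed

lemma choose_le_split:
  "l \<le> j \<Longrightarrow> choose_le t j = choose_le t l + (\<Sum>i\<in>{l<..j}. t choose i)"
  unfolding choose_le_def
  by (subst sum.union_disjoint[symmetric]) (auto intro: sum.cong)

lemma choose_le_Suc_le_iff:
  "l \<le> k \<Longrightarrow> choose_le t (Suc k) \<le> choose_le t l \<longleftrightarrow> t \<le> l"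
proof -
  assume "l \<le> k"
  then have "choose_le t (Suc k) \<le> choose_le t l \<longleftrightarrow> (\<forall>i\<in>{l<..Suc k}. t < i)"
    using choose_le_split[of l "Suc k" t] by simp
  also have "\<dots> \<longleftrightarrow> t \<le> l"
    using \<open>l \<le> k\<close> by (auto dest: bspec[of _ _ "Suc l"])
  finally show ?thesis .
qed

lemma Sup_choose_le_threshold:
  "Sup {enat t | t. choose_le t (k + 1) \<le> choose_le t l} = (if k < l then \<infinity> else enat l)"
proof (cases "k < l")
  case True
  then have "choose_le t (k + 1) \<le> choose_le t l" for t
    using choose_le_split[of "k + 1" l t] by simp
  with True show ?thesis
    by (simp, intro Sup_enat_unbounded) blast
next
  case False
  then show ?thesis
    by (simp, intro Sup_enat_eq_greatest) (auto simp: choose_le_Suc_le_iff)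
qed

theorem mainTheorem10:
  fixes l k :: nat
  assumes "infinite (UNIV :: 'a set)"
  shows "ELdim (Cl l :: ('a \<Rightarrow> int) set) k
           = Sup {enat t | t. choose_le t (k + 1) \<le> choose_le t l}
       \<and> ELdim (Cl l :: ('a \<Rightarrow> int) set) k = (if k < l then \<infinity> else enat l)"
proof -
  have "ELdim (Cl l :: ('a \<Rightarrow> int) set) k = (if k < l then \<infinity> else enat l)"
    using ELdim_Cl_infinite[OF assms] ELdim_Cl_finite[OF assms] by simp
  then show ?thesis
    using Sup_choose_le_threshold by simp
qed

end
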